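(* Let $n\ge 4$, $s_k=\sin(k\pi/n)$, and let $D_1,\dots,D_{n-1}$ be positive numbers satisfying $D_kD_{l-j}\ge D_jD_{l-k}+D_lD_{k-j}$ for all integers $1\le j<k<l\le n-1$, together with $D_1=D_{n-1}=s_1$. Let $a_k=\log(D_k/s_k)$. Then $a_1=a_{n-1}=0$, and for every $k\in\{2,\dots,n-2\}$ the number $q_k=s_{k+1}s_{k-1}/s_k^2$ satisfies $0<q_k<1$ and $$a_k\ \ge\ q_k\,\frac{a_{k+1}+a_{k-1}}{2}.$$ *)

theory Defs
  imports Complex_Main
begin

end

theory Submission
  imports Defs "HOL-Analysis.Convex"
begin

text \<open>Put \<open>x\<^sub>k = D\<^sub>k / s\<^sub>k\<close>. The hypothesis with \<open>(j, k, l) = (1, k, k + 1)\<close>, together with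
  \<open>D\<^sub>1 = s\<^sub>1\<close> and the sine identity \<open>s\<^sub>k\<^sup>2 = s\<^sub>1\<^sup>2 + s\<^sub>k\<^sub>+\<^sub>1 s\<^sub>k\<^sub>-\<^sub>1\<close>, becomes
  \<open>x\<^sub>k\<^sup>2 \<ge> (1 - q\<^sub>k) + q\<^sub>k x\<^sub>k\<^sub>+\<^sub>1 x\<^sub>k\<^sub>-\<^sub>1\<close>; in particular \<open>0 < q\<^sub>k < 1\<close>. Convexity of \<open>exp\<close> bounds
  the right-hand side below by \<open>exp (q\<^sub>k (a\<^sub>k\<^sub>+\<^sub>1 + a\<^sub>k\<^sub>-\<^sub>1))\<close>, and taking logarithms gives the claim.\<close>

lemma exp_mult_le_convex_combination:
  fixes q t :: real
  assumes "0 \<le> q" "q \<le> 1"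
  shows "exp (q * t) \<le> (1 - q) + q * exp t"
  using convex_onD[OF exp_convex, of q 0 t] assms by simp

lemma sin_squared_minus_sin_add_mult_sin_diff:
  fixes x y :: real
  shows "sin x ^ 2 - sin (x + y) * sin (x - y) = sin y ^ 2"
proof -
  have "sin x ^ 2 - sin (x + y) * sin (x - y) = sin x ^ 2 * (1 - cos y ^ 2) + cos x ^ 2 * sin y ^ 2"
    by (simp add: sin_add sin_diff power2_eq_square algebra_simps)
  also have "\<dots> = (sin x ^ 2 + cos x ^ 2) * sin y ^ 2"
    by (simp add: sin_squared_eq algebra_simps)
  also have "\<dots> = sin y ^ 2"
    by simp
  finally show ?thesis .
qed

lemma sin_multiple_pi_div_pos:
  assumes "0 < k" "k < n"
  shows "sin (real k * pi / real n) > 0"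
proof (rule sin_gt_zero)
  show "0 < real k * pi / real n" using assms by simp
  show "real k * pi / real n < pi" using assms by (simp add: field_simps)
qed

lemma sin_pred_multiple_pi_div:
  assumes "0 < n"
  shows "sin (real (n - 1) * pi / real n) = sin (pi / real n)"
proof -
  have "real (n - 1) * pi / real n = pi - pi / real n"
    using assms by (simp add: of_nat_diff field_simps)
  thus ?thesis by simp
qed

lemma sin_multiple_pi_div_squared_recurrence:
  assumes "1 \<le> k"
  shows "sin (real k * pi / real n) ^ 2
           - sin (real (k + 1) * pi / real n) * sin (real (k - 1) * pi / real n)
         = sin (pi / real n) ^ 2"
proof -
  have "real (k + 1) * pi / real n = real k * pi / real n + pi / real n"
    by (simp add: distrib_right add_divide_distrib)
  moreover have "real (k - 1) * pi / real n = real k * pi / real n - pi / real n"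
    using assms by (simp add: of_nat_diff left_diff_distrib diff_divide_distrib)
  ultimately show ?thesis
    using sin_squared_minus_sin_add_mult_sin_diff by presburger
qed

lemma normalized_squared_ge_convex_combination:
  fixes d d_succ d_pred c s s_succ s_pred :: real
  assumes "s > 0"
    and sines: "s ^ 2 = c ^ 2 + s_succ * s_pred"
    and ds: "d ^ 2 \<ge> c ^ 2 + d_succ * d_pred"
    and "s_succ \<noteq> 0" "s_pred \<noteq> 0"
  defines "q \<equiv> s_succ * s_pred / s ^ 2"
  shows "(d / s) ^ 2 \<ge> (1 - q) + q * ((d_succ / s_succ) * (d_pred / s_pred))"
proof -
  have "1 - q = (s ^ 2 - s_succ * s_pred) / s ^ 2"
    using \<open>s > 0\<close> by (simp add: q_def diff_divide_distrib)
  hence "(1 - q) + q * ((d_succ / s_succ) * (d_pred / s_pred)) = (c ^ 2 + d_succ * d_pred) / s ^ 2"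
    using sines \<open>s_succ \<noteq> 0\<close> \<open>s_pred \<noteq> 0\<close> by (simp add: q_def add_divide_distrib)
  also have "\<dots> \<le> (d / s) ^ 2"
    using ds \<open>s > 0\<close> by (simp add: power_divide divide_right_mono)
  finally show ?thesis .
qed

lemma ln_ge_of_squared_ge_convex_combination:
  fixes x y z q :: real
  assumes "0 \<le> q" "q \<le> 1" "x > 0" "y > 0" "z > 0"
    and "x ^ 2 \<ge> (1 - q) + q * (y * z)"
  shows "ln x \<ge> q * (ln y + ln z) / 2"
proof -
  have "exp (q * (ln y + ln z)) \<le> x ^ 2"
    using exp_mult_le_convex_combination[of q "ln y + ln z"] assms
    by (simp add: exp_add)
  hence "q * (ln y + ln z) \<le> ln (x ^ 2)"
    using assms by (simp add: ln_ge_iff)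
  thus ?thesis using assms by (simp add: ln_realpow)
qed

lemma ln_normalized_ge_weighted_mean:
  fixes d d_succ d_pred c s s_succ s_pred :: real
  assumes "c \<noteq> 0" "s > 0" "s_succ > 0" "s_pred > 0" "d > 0" "d_succ > 0" "d_pred > 0"
    and sines: "s ^ 2 = c ^ 2 + s_succ * s_pred"
    and ds: "d ^ 2 \<ge> c ^ 2 + d_succ * d_pred"
  defines "q \<equiv> s_succ * s_pred / s ^ 2"
  shows "0 < q \<and> q < 1 \<and> ln (d / s) \<ge> q * (ln (d_succ / s_succ) + ln (d_pred / s_pred)) / 2"
proof -
  have "s_succ * s_pred < s ^ 2"
    using sines \<open>c \<noteq> 0\<close> by simp
  hence q_bounds: "0 < q" "q < 1"
    using \<open>s > 0\<close> \<open>s_succ > 0\<close> \<open>s_pred > 0\<close> by (simp_all add: q_def)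
  have "(d / s) ^ 2 \<ge> (1 - q) + q * ((d_succ / s_succ) * (d_pred / s_pred))"
    using normalized_squared_ge_convex_combination[OF _ sines ds] assms by (simp add: q_def)
  moreover have "d / s > 0" "d_succ / s_succ > 0" "d_pred / s_pred > 0"
    using assms by simp_all
  ultimately show ?thesis
    using ln_ge_of_squared_ge_convex_combination q_bounds by simp
qed

theorem mainTheorem11:
  fixes n :: nat and D :: "nat \<Rightarrow> real"
  assumes n4: "n \<ge> 4"
    and pos: "\<And>k. 1 \<le> k \<Longrightarrow> k \<le> n - 1 \<Longrightarrow> D k > 0"
    and ineq: "\<And>j k l. 1 \<le> j \<Longrightarrow> j < k \<Longrightarrow> k < l \<Longrightarrow> l \<le> n - 1 \<Longrightarrow>
                 D k * D (l - j) \<ge> D j * D (l - k) + D l * D (k - j)"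
    and D1: "D 1 = sin (pi / real n)"
    and Dn1: "D (n - 1) = sin (pi / real n)"
  shows "(let s = (\<lambda>k::nat. sin (real k * pi / real n));
              a = (\<lambda>k. ln (D k / s k))
          in a 1 = 0 \<and> a (n - 1) = 0 \<and>
             (\<forall>k. 2 \<le> k \<and> k \<le> n - 2 \<longrightarrow>
                (let q = s (k + 1) * s (k - 1) / (s k)\<^sup>2
                 in 0 < q \<and> q < 1 \<and> a k \<ge> q * (a (k + 1) + a (k - 1)) / 2)))"
proof -
  define s where "s = (\<lambda>k::nat. sin (real k * pi / real n))"
  have s_pos: "s k > 0" if "1 \<le> k" "k \<le> n - 1" for k
    using that n4 sin_multiple_pi_div_pos[of k n] by (simp add: s_def)
  have s_ends: "s 1 = sin (pi / real n)" "s (n - 1) = sin (pi / real n)"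
    using n4 sin_pred_multiple_pi_div[of n] by (simp_all add: s_def)
  have step: "0 < q \<and> q < 1 \<and> ln (D k / s k) \<ge> q * (ln (D (k + 1) / s (k + 1)) + ln (D (k - 1) / s (k - 1))) / 2"
    if k: "2 \<le> k" "k \<le> n - 2" and q: "q = s (k + 1) * s (k - 1) / (s k)\<^sup>2" for k q
  proof -
    have k_range: "1 \<le> k - 1" "k + 1 \<le> n - 1"
      using k by simp_all
    have "s k ^ 2 = s 1 ^ 2 + s (k + 1) * s (k - 1)"
      using sin_multiple_pi_div_squared_recurrence[of k n] k by (simp add: s_def s_ends)
    moreover have "D k ^ 2 \<ge> s 1 ^ 2 + D (k + 1) * D (k - 1)"
      using ineq[of 1 k "k + 1"] k D1 s_ends by (simp add: power2_eq_square)
    moreover have "s 1 > 0"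
      using s_pos n4 by simp
    ultimately show ?thesis
      unfolding q using k_range
      by (intro ln_normalized_ge_weighted_mean s_pos pos) auto
  qed
  show ?thesis
    unfolding Let_def s_def[symmetric]
    using step[OF _ _ refl] s_ends D1 Dn1 s_pos[of 1] n4 by simp
qed

end
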